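(* Assume the general setting of the context, with Hypothesis A holding for $r=\sum_{i=0}^{\bar k}r_i$. If $\hat\delta\in(0,\infty)^{\bar k}$ is feasible, then the map $\delta\mapsto\inf_{\pi\in\mathcal H(\delta)}\pi(r_0)$ is continuous at $\hat\delta$.
   Context: General setting. Consider the controlled diffusion $dX_t=b(X_t,U_t)\,dt+\sigma(X_t)\,dW_t$ in $\mathbb R^d$, where $W$ is a standard $d$-dimensional Brownian motion and the control takes values in a compact metrizable set $\mathbb U$. Assume: $b$ continuous and, together with $\sigma$, locally Lipschitz in $x$ (uniformly in $u$); $|b(x,u)|^2+\|\sigma(x)\|^2\le C(1+|x|^2)$; $a=\sigma\sigma^{\mathsf T}$ uniformly positive definite on every ball. Controls may be relaxed ($\mathcal P(\mathbb U)$-valued, with $b$ and costs extended by integration). Controlled generator $\mathcal L^u f=\tfrac12\sum a_{ij}\partial_{ij}f+b(x,u)\cdot\nabla f$. $\mathscr G=\{\pi\in\mathcal P(\mathbb R^d\times\mathbb U):\int\mathcal L^u f\,d\pi=0\ \forall f\in C_c^\infty(\mathbb R^d)\}$ (the set of ergodic occupation measures of stable stationary Markov controls); $\pi(g)=\int g\,d\pi$. Costs $r_0,\dots,r_{\bar k}\ge0$ continuous, locally Lipschitz in $x$ uniformly in $u$; $r=\sum_i r_i$. For $\delta\in\mathbb R_+^{\bar k}$: $\mathcal H(\delta)=\{\pi\in\mathscr G:\pi(r_i)\le\delta_i,\ i=1,\dots,\bar k\}$ and $\mathcal H^{\circ}(\delta)=\{\pi\in\mathscr G:\pi(r_i)<\delta_i,\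 i=1,\dots,\bar k\}$. A vector $\delta\in(0,\infty)^{\bar k}$ is feasible if there is $\pi'\in\mathcal H^\circ(\delta)$ with $\pi'(r_0)<\infty$. Hypothesis A (for a cost $r$): there is an open $\mathcal K\subset\mathbb R^d$ such that (i) $\bar{\mathcal K}\cap\{x:\min_u r(x,u)\le c\}$ is compact for all $c$; (ii) there exist nonnegative inf-compact $\mathcal V\in C^2(\mathbb R^d)$ and $h\in C(\mathbb R^d\times\mathbb U)$ with $\mathcal L^u\mathcal V\le1-h$ on $\mathcal K^c\times\mathbb U$ and $\mathcal L^u\mathcal V\le 1+r$ on $\mathcal K\times\mathbb U$. *)

theory Defs
  imports "HOL-Probability.Probability"
begin

definition pd :: "'n::finite \<Rightarrow> (real^'n \<Rightarrow> real) \<Rightarrow> real^'n \<Rightarrow> real" where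
  "pd i f x = frechet_derivative f (at x) (axis i 1)"

fun iter_pd :: "'n::finite list \<Rightarrow> (real^'n \<Rightarrow> real) \<Rightarrow> real^'n \<Rightarrow> real" where
  "iter_pd [] f = f"
| "iter_pd (i # is) f = pd i (iter_pd is f)"

definition smooth_fun :: "(real^'n::finite \<Rightarrow> real) \<Rightarrow> bool" where
  "smooth_fun f \<longleftrightarrow> (\<forall>is x. iter_pd is f differentiable (at x))"

definition Cc_inf :: "(real^'n::finite \<Rightarrow> real) set" where
  "Cc_inf = {f. smooth_fun f \<and> compact (closure {x. f x \<noteq> 0})}"

definition C2_fun :: "(real^'n::finite \<Rightarrow> real) \<Rightarrow> bool" where
  "C2_fun f \<longleftrightarrow> (\<forall>x. f differentiable (at x)) \<and>
     (\<forall>i x. pd i f differentiable (at x)) \<and>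
     (\<forall>i j. continuous_on UNIV (pd i (pd j f)))"

definition Lgen :: "(real^'n \<Rightarrow> real^'n^'n) \<Rightarrow> (real^'n \<Rightarrow> 'u \<Rightarrow> real^'n)
    \<Rightarrow> (real^'n::finite \<Rightarrow> real) \<Rightarrow> real^'n \<Rightarrow> 'u \<Rightarrow> real" where
  "Lgen \<sigma> b f x u =
     (1/2) * (\<Sum>i\<in>UNIV. \<Sum>j\<in>UNIV. ((\<sigma> x ** transpose (\<sigma> x)) $ i $ j) * pd i (pd j f) x)
     + (\<Sum>i\<in>UNIV. (b x u) $ i * pd i f x)"

definition prob_on :: "'u::metric_space set \<Rightarrow> ((real^'n::finite) \<times> 'u) measure \<Rightarrow> bool" where
  "prob_on U \<pi> \<longleftrightarrow> prob_space \<pi> \<and> sets \<pi> = sets borel \<and> emeasure \<pi> (UNIV \<times> U) = 1"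

definition occ_G :: "'u::metric_space set \<Rightarrow> (real^'n \<Rightarrow> real^'n^'n) \<Rightarrow> (real^'n \<Rightarrow> 'u \<Rightarrow> real^'n)
     \<Rightarrow> ((real^'n::finite) \<times> 'u) measure set" where
  "occ_G U \<sigma> b = {\<pi>. prob_on U \<pi> \<and>
      (\<forall>f\<in>Cc_inf. (\<integral>z. Lgen \<sigma> b f (fst z) (snd z) \<partial>\<pi>) = 0)}"

definition cost_int :: "((real^'n::finite) \<times> 'u) measure \<Rightarrow> (real^'n \<Rightarrow> 'u \<Rightarrow> real) \<Rightarrow> ennreal" where
  "cost_int \<pi> g = (\<integral>\<^sup>+ z. ennreal (g (fst z) (snd z)) \<partial>\<pi>)"

text \<open>\<H>(\<delta>), \<H>\<degree>(\<delta>); the constraint costs are indexed by the finite type 'k (k-bar = CARD('k)).\<close>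
definition H_set :: "'u::metric_space set \<Rightarrow> (real^'n \<Rightarrow> real^'n^'n) \<Rightarrow> (real^'n \<Rightarrow> 'u \<Rightarrow> real^'n)
     \<Rightarrow> ('k::finite \<Rightarrow> real^'n::finite \<Rightarrow> 'u \<Rightarrow> real) \<Rightarrow> real^'k \<Rightarrow> ((real^'n) \<times> 'u) measure set" where
  "H_set U \<sigma> b rc \<delta> = {\<pi>\<in>occ_G U \<sigma> b. \<forall>i. cost_int \<pi> (rc i) \<le> ennreal (\<delta> $ i)}"

definition H_open :: "'u::metric_space set \<Rightarrow> (real^'n \<Rightarrow> real^'n^'n) \<Rightarrow> (real^'n \<Rightarrow> 'u \<Rightarrow> real^'n)
     \<Rightarrow> ('k::finite \<Rightarrow> real^'n::finite \<Rightarrow> 'u \<Rightarrow> real) \<Rightarrow> real^'k \<Rightarrow> ((real^'n) \<times> 'u) measure set" where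
  "H_open U \<sigma> b rc \<delta> = {\<pi>\<in>occ_G U \<sigma> b. \<forall>i. cost_int \<pi> (rc i) < ennreal (\<delta> $ i)}"

definition feasible where
  "feasible U \<sigma> b r0 rc \<delta> \<longleftrightarrow> (\<forall>i. 0 < \<delta> $ i) \<and>
      (\<exists>\<pi>'\<in>H_open U \<sigma> b rc \<delta>. cost_int \<pi>' r0 < \<infinity>)"

definition opt_val where
  "opt_val U \<sigma> b r0 rc \<delta> = (INF \<pi>\<in>H_set U \<sigma> b rc \<delta>. cost_int \<pi> r0)"

definition loc_lipschitz_unif :: "'u set \<Rightarrow> (real^'n::finite \<Rightarrow> 'u \<Rightarrow> 'b::real_normed_vector) \<Rightarrow> bool" where
  "loc_lipschitz_unif U g \<longleftrightarrow> (\<forall>R>0. \<exists>L. \<forall>u\<in>U. \<forall>x\<in>cball 0 R. \<forall>y\<in>cball 0 R.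
       norm (g x u - g y u) \<le> L * norm (x - y))"

definition inf_compact_x :: "(real^'n::finite \<Rightarrow> real) \<Rightarrow> bool" where
  "inf_compact_x V \<longleftrightarrow> (\<forall>c. compact {x. V x \<le> c})"

definition inf_compact_xu :: "'u::metric_space set \<Rightarrow> (real^'n::finite \<Rightarrow> 'u \<Rightarrow> real) \<Rightarrow> bool" where
  "inf_compact_xu U h \<longleftrightarrow> (\<forall>c. compact {z \<in> UNIV \<times> U. h (fst z) (snd z) \<le> c})"

definition standing_assms where
  "standing_assms U \<sigma> b \<longleftrightarrow>
     compact U \<and> U \<noteq> {} \<and>
     continuous_on (UNIV \<times> U) (\<lambda>z. b (fst z) (snd z)) \<and>
     loc_lipschitz_unif U b \<and>
     (\<forall>R>0. \<exists>L. \<forall>x\<in>cball 0 R. \<forall>y\<in>cball 0 R. onorm (\<lambda>v. (\<sigma> x - \<sigma> y) *v v) \<le> L * norm (x - y)) \<and>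
     (\<exists>C. \<forall>x. \<forall>u\<in>U. (norm (b x u))\<^sup>2 + (onorm (\<lambda>v. \<sigma> x *v v))\<^sup>2 \<le> C * (1 + (norm x)\<^sup>2)) \<and>
     (\<forall>R>0. \<exists>\<kappa>>0. \<forall>x\<in>cball 0 R. \<forall>\<xi>. \<xi> \<bullet> ((\<sigma> x ** transpose (\<sigma> x)) *v \<xi>) \<ge> \<kappa> * (norm \<xi>)\<^sup>2)"

definition cost_assm :: "'u::metric_space set \<Rightarrow> (real^'n::finite \<Rightarrow> 'u \<Rightarrow> real) \<Rightarrow> bool" where
  "cost_assm U g \<longleftrightarrow> (\<forall>x. \<forall>u\<in>U. 0 \<le> g x u) \<and>
     continuous_on (UNIV \<times> U) (\<lambda>z. g (fst z) (snd z)) \<and> loc_lipschitz_unif U g"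

definition hypA where
  "hypA U \<sigma> b r \<longleftrightarrow> (\<exists>K. open K \<and>
     (\<forall>c. compact (closure K \<inter> {x. (INF u\<in>U. r x u) \<le> c})) \<and>
     (\<exists>V h. C2_fun V \<and> (\<forall>x. 0 \<le> V x) \<and> inf_compact_x V \<and>
        continuous_on (UNIV \<times> U) (\<lambda>z. h (fst z) (snd z)) \<and>
        (\<forall>x. \<forall>u\<in>U. 0 \<le> h x u) \<and> inf_compact_xu U h \<and>
        (\<forall>x\<in>-K. \<forall>u\<in>U. Lgen \<sigma> b V x u \<le> 1 - h x u) \<and>
        (\<forall>x\<in>K. \<forall>u\<in>U. Lgen \<sigma> b V x u \<le> 1 + r x u)))"

end

theory Submission
  imports Defs
begin

text \<open>The constraint set \<open>H(\<delta>)\<close> lives in the convex set of ergodic occupation measures, and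
  the constraints and the objective are linear in \<open>\<pi>\<close>. Mixing near-optimal measures for \<open>\<delta>\<^sub>1\<close>
  and \<open>\<delta>\<^sub>2\<close> therefore shows that the value function is convex. Feasibility of \<open>\<delta>\<close> gives a
  measure \<open>\<pi>'\<close> with finite cost satisfying all constraints strictly, so the value function is
  finite on an open orthant around \<open>\<delta>\<close>; a finite convex function on an open convex set is
  continuous.\<close>

text \<open>The mixture \<open>t p + (1 - t) q\<close> of two probability measures, as a Giry-monad bind over a
  Bernoulli choice.\<close>

definition mix :: "real \<Rightarrow> 'a measure \<Rightarrow> 'a measure \<Rightarrow> 'a measure" where
  "mix t p q = measure_pmf (bernoulli_pmf t) \<bind> (\<lambda>b. if b then p else q)"

lemma mix_kernel_measurable:
  assumes "prob_space p" "prob_space q" "sets q = sets p"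
  shows "(\<lambda>b. if b then p else q) \<in> measurable (measure_pmf (bernoulli_pmf t)) (subprob_algebra p)"
  using assms by (auto simp: space_subprob_algebra prob_space_imp_subprob_space)

lemma sets_mix:
  assumes "prob_space p" "prob_space q" "sets q = sets p"
  shows "sets (mix t p q) = sets p"
  unfolding mix_def by (rule sets_bind) (use assms in auto)

lemma prob_space_mix:
  assumes "prob_space p" "prob_space q" "sets q = sets p" "0 \<le> t" "t \<le> 1"
  shows "prob_space (mix t p q)"
  unfolding mix_def
  by (rule prob_space.prob_space_bind[OF prob_space_measure_pmf _ mix_kernel_measurable[OF assms(1-3)]])
     (use assms in auto)

lemma nn_integral_mix:
  assumes "prob_space p" "prob_space q" "sets q = sets p" "0 \<le> t" "t \<le> 1"
    and "f \<in> borel_measurable p"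
  shows "(\<integral>\<^sup>+z. f z \<partial>mix t p q) = (\<integral>\<^sup>+z. f z \<partial>p) * ennreal t + (\<integral>\<^sup>+z. f z \<partial>q) * ennreal (1 - t)"
proof -
  have "(\<integral>\<^sup>+z. f z \<partial>mix t p q)
      = (\<integral>\<^sup>+b. \<integral>\<^sup>+z. f z \<partial>(if b then p else q) \<partial>measure_pmf (bernoulli_pmf t))"
    unfolding mix_def by (rule nn_integral_bind[OF assms(6) mix_kernel_measurable[OF assms(1-3)]])
  then show ?thesis
    using assms by simp
qed

lemma integrable_mixD:
  fixes g :: "'a \<Rightarrow> real"
  assumes "prob_space p" "prob_space q" "sets q = sets p" "0 < t" "t < 1"
    and "integrable (mix t p q) g"
  shows "integrable p g" "integrable q g"
proof -
  have g_p: "g \<in> borel_measurable p" and g_q: "g \<in> borel_measurable q"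
    using borel_measurable_integrable[OF assms(6)] sets_mix[OF assms(1-3)] assms(3)
    by (auto cong: measurable_cong_sets)
  have "(\<lambda>z. ennreal (norm (g z))) \<in> borel_measurable p"
    using g_p by measurable
  then have "(\<integral>\<^sup>+z. norm (g z) \<partial>p) * ennreal t + (\<integral>\<^sup>+z. norm (g z) \<partial>q) * ennreal (1 - t)
      = (\<integral>\<^sup>+z. norm (g z) \<partial>mix t p q)"
    using nn_integral_mix[OF assms(1-3)] assms(4,5) by simp
  also have "\<dots> < top"
    using assms(6) by (simp add: integrable_iff_bounded)
  finally have "(\<integral>\<^sup>+z. norm (g z) \<partial>p) * ennreal t + (\<integral>\<^sup>+z. norm (g z) \<partial>q) * ennreal (1 - t) < top" .
  then have "(\<integral>\<^sup>+z. norm (g z) \<partial>p) < top" "(\<integral>\<^sup>+z. norm (g z) \<partial>q) < top"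
    using assms(4,5) by (auto simp: ennreal_mult_less_top less_top)
  then show "integrable p g" "integrable q g"
    using g_p g_q by (auto intro: integrableI_bounded)
qed

lemma integral_mix:
  fixes g :: "'a \<Rightarrow> real"
  assumes "prob_space p" "prob_space q" "sets q = sets p" "0 < t" "t < 1"
    and "integrable (mix t p q) g"
  shows "integral\<^sup>L (mix t p q) g = t * integral\<^sup>L p g + (1 - t) * integral\<^sup>L q g"
proof -
  have int: "integrable p g" "integrable q g"
    using integrable_mixD[OF assms] by auto
  have nn: "enn2real (\<integral>\<^sup>+z. ennreal (h z) \<partial>mix t p q)
      = t * enn2real (\<integral>\<^sup>+z. ennreal (h z) \<partial>p) + (1 - t) * enn2real (\<integral>\<^sup>+z. ennreal (h z) \<partial>q)"
    if "integrable p h" "integrable q h" for h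
  proof -
    have "(\<integral>\<^sup>+z. ennreal (h z) \<partial>p) \<noteq> top" "(\<integral>\<^sup>+z. ennreal (h z) \<partial>q) \<noteq> top"
      "h \<in> borel_measurable p"
      using that by (auto simp: real_integrable_def)
    moreover have "(\<lambda>z. ennreal (h z)) \<in> borel_measurable p"
      using \<open>h \<in> borel_measurable p\<close> by measurable
    ultimately show ?thesis
      using nn_integral_mix[OF assms(1-3), of t "\<lambda>z. ennreal (h z)"] assms(4,5)
      by (simp add: enn2real_plus enn2real_mult ennreal_mult_less_top top.not_eq_extremum)
  qed
  show ?thesis
    unfolding real_lebesgue_integral_def[OF assms(6)] real_lebesgue_integral_def[OF int(1)]
      real_lebesgue_integral_def[OF int(2)] nn[OF int] nn[OF integrable_minus[OF int(1)] integrable_minus[OF int(2)]]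
    by (simp add: algebra_simps)
qed

lemma AE_prob_on:
  assumes "prob_on U M" "closed U"
  shows "AE z in M. z \<in> UNIV \<times> U"
proof -
  interpret prob_space M
    using assms(1) by (simp add: prob_on_def)
  have "UNIV \<times> U \<in> events"
    using assms by (simp add: prob_on_def borel_closed closed_Times)
  moreover have "prob (UNIV \<times> U) = 1"
    using assms(1) by (simp add: prob_on_def emeasure_eq_measure)
  ultimately show ?thesis
    by (simp add: AE_in_set_eq_1)
qed

text \<open>A cost is only continuous on \<open>\<real>\<^sup>d \<times> U\<close>; cutting it off outside makes it Borel measurable
  without changing its integral.\<close>

lemma cost_int_indicator:
  assumes "prob_on U M" "closed U"
  shows "cost_int M g = (\<integral>\<^sup>+z. ennreal (indicator (UNIV \<times> U) z *\<^sub>R g (fst z) (snd z)) \<partial>M)"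
  unfolding cost_int_def
  by (rule nn_integral_cong_AE) (use AE_prob_on[OF assms] in \<open>auto elim!: AE_mp\<close>)

lemma prob_on_mix:
  assumes "prob_on U p" "prob_on U q" "closed U" "0 \<le> t" "t \<le> 1"
  shows "prob_on U (mix t p q)"
proof -
  have p: "prob_space p" "prob_space q" "sets q = sets p" "sets p = sets borel"
    using assms by (auto simp: prob_on_def)
  have UxU: "UNIV \<times> U \<in> sets borel"
    using assms(3) by (simp add: borel_closed closed_Times)
  have "emeasure (mix t p q) (UNIV \<times> U) = (\<integral>\<^sup>+z. indicator (UNIV \<times> U) z \<partial>mix t p q)"
    using UxU sets_mix[OF p(1-3)] p(4) by (subst nn_integral_indicator) auto
  also have "\<dots> = emeasure p (UNIV \<times> U) * ennreal t + emeasure q (UNIV \<times> U) * ennreal (1 - t)"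
    using nn_integral_mix[OF p(1-3) assms(4,5) borel_measurable_indicator, of "UNIV \<times> U"] UxU p
    by (simp add: nn_integral_indicator)
  also have "\<dots> = 1"
    using assms by (simp add: prob_on_def ennreal_plus[symmetric] del: ennreal_plus)
  finally show ?thesis
    using prob_space_mix[OF p(1-3) assms(4,5)] sets_mix[OF p(1-3)] p(4) by (simp add: prob_on_def)
qed

lemma cost_int_mix:
  assumes "prob_on U p" "prob_on U q" "closed U" "0 \<le> t" "t \<le> 1"
    and "continuous_on (UNIV \<times> U) (\<lambda>z. g (fst z) (snd z))"
  shows "cost_int (mix t p q) g = cost_int p g * ennreal t + cost_int q g * ennreal (1 - t)"
proof -
  have p: "prob_space p" "prob_space q" "sets q = sets p" "sets p = sets borel"
    using assms by (auto simp: prob_on_def)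
  have "(\<lambda>z. indicator (UNIV \<times> U) z *\<^sub>R g (fst z) (snd z)) \<in> borel_measurable borel"
    using assms(3,6) by (intro borel_measurable_continuous_on_indicator) (auto simp: borel_closed closed_Times)
  then have "(\<lambda>z. ennreal (indicator (UNIV \<times> U) z *\<^sub>R g (fst z) (snd z))) \<in> borel_measurable p"
    using p(4) by (simp cong: measurable_cong_sets)
  then show ?thesis
    unfolding cost_int_indicator[OF prob_on_mix[OF assms(1-5)] assms(3)]
      cost_int_indicator[OF assms(1,3)] cost_int_indicator[OF assms(2,3)]
    by (rule nn_integral_mix[OF p(1-3) assms(4,5)])
qed

text \<open>The defining condition of \<open>occ_G\<close> uses the Bochner integral, which is \<open>0\<close> for
  non-integrable functions; so only the integrable case needs an argument.\<close>

lemma occ_G_mix: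
  assumes "p \<in> occ_G U \<sigma> b" "q \<in> occ_G U \<sigma> b" "closed U" "0 < t" "t < 1"
  shows "mix t p q \<in> occ_G U \<sigma> b"
proof -
  have on: "prob_on U p" "prob_on U q"
    using assms by (auto simp: occ_G_def)
  then have p: "prob_space p" "prob_space q" "sets q = sets p"
    by (auto simp: prob_on_def)
  have "(\<integral>z. Lgen \<sigma> b f (fst z) (snd z) \<partial>mix t p q) = 0" if "f \<in> Cc_inf" for f
  proof (cases "integrable (mix t p q) (\<lambda>z. Lgen \<sigma> b f (fst z) (snd z))")
    case True
    then show ?thesis
      using integral_mix[OF p assms(4,5) True] assms(1,2) that by (simp add: occ_G_def)
  qed (simp add: not_integrable_integral_eq)
  then show ?thesis
    using prob_on_mix[OF on assms(3)] assms(4,5) by (simp add: occ_G_def)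
qed

lemma H_set_mix:
  assumes "p \<in> H_set U \<sigma> b rc x" "q \<in> H_set U \<sigma> b rc y" "closed U" "0 < t" "t < 1"
    and "\<And>i. continuous_on (UNIV \<times> U) (\<lambda>z. rc i (fst z) (snd z))"
    and "\<And>i. 0 \<le> x $ i" "\<And>i. 0 \<le> y $ i"
  shows "mix t p q \<in> H_set U \<sigma> b rc (t *\<^sub>R x + (1 - t) *\<^sub>R y)"
proof -
  have G: "p \<in> occ_G U \<sigma> b" "q \<in> occ_G U \<sigma> b"
    using assms(1,2) by (auto simp: H_set_def)
  have "cost_int (mix t p q) (rc i) \<le> ennreal ((t *\<^sub>R x + (1 - t) *\<^sub>R y) $ i)" for i
  proof -
    have "cost_int (mix t p q) (rc i) = cost_int p (rc i) * ennreal t + cost_int q (rc i) * ennreal (1 - t)"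
      using G assms(3-6) by (intro cost_int_mix) (auto simp: occ_G_def)
    also have "\<dots> \<le> ennreal (x $ i) * ennreal t + ennreal (y $ i) * ennreal (1 - t)"
      using assms(1,2) by (intro add_mono mult_right_mono) (auto simp: H_set_def)
    also have "\<dots> = ennreal (x $ i * t + y $ i * (1 - t))"
      using assms(4,5) assms(7,8)[of i] by (subst ennreal_plus) (auto simp: ennreal_mult)
    also have "\<dots> = ennreal ((t *\<^sub>R x + (1 - t) *\<^sub>R y) $ i)"
      by (simp add: mult.commute)
    finally show ?thesis .
  qed
  then show ?thesis
    using occ_G_mix[OF G assms(3-5)] by (simp add: H_set_def)
qed

lemma le_convex_comb_INF_ennreal:
  fixes c :: ennreal and f g :: "_ \<Rightarrow> ennreal" and t :: real
  assumes "0 < t" "t < 1"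
    and "\<And>a b. a \<in> A \<Longrightarrow> b \<in> B \<Longrightarrow> c \<le> f a * ennreal t + g b * ennreal (1 - t)"
  shows "c \<le> (INF a\<in>A. f a) * ennreal t + (INF b\<in>B. g b) * ennreal (1 - t)"
proof (rule ennreal_le_epsilon)
  fix e :: real
  assume fin: "(INF a\<in>A. f a) * ennreal t + (INF b\<in>B. g b) * ennreal (1 - t) < top" and "0 < e"
  then have "(INF a\<in>A. f a) * ennreal t \<noteq> top" "(INF b\<in>B. g b) * ennreal (1 - t) \<noteq> top"
    by auto
  then have "(INF a\<in>A. f a) \<noteq> \<infinity>" "(INF b\<in>B. g b) \<noteq> \<infinity>"
    using assms(1,2) by (auto simp: ennreal_mult_eq_top_iff)
  then obtain a b where ab: "a \<in> A" "f a < (INF a\<in>A. f a) + ennreal e"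
      "b \<in> B" "g b < (INF b\<in>B. g b) + ennreal e"
    using INF_approx_ennreal[OF \<open>0 < e\<close> refl] by meson
  have e_split: "ennreal e * ennreal t + ennreal e * ennreal (1 - t) = ennreal e"
    using \<open>0 < e\<close> assms(1,2)
    by (simp add: ennreal_mult[symmetric] ennreal_plus[symmetric] algebra_simps del: ennreal_plus)
  have "c \<le> f a * ennreal t + g b * ennreal (1 - t)"
    using ab assms(3) by blast
  also have "\<dots> \<le> ((INF a\<in>A. f a) + ennreal e) * ennreal t + ((INF b\<in>B. g b) + ennreal e) * ennreal (1 - t)"
    using ab by (intro add_mono mult_right_mono) auto
  also have "\<dots> = (INF a\<in>A. f a) * ennreal t + (INF b\<in>B. g b) * ennreal (1 - t)
      + (ennreal e * ennreal t + ennreal e * ennreal (1 - t))"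
    by (simp add: distrib_left distrib_right ac_simps)
  also have "\<dots> = (INF a\<in>A. f a) * ennreal t + (INF b\<in>B. g b) * ennreal (1 - t) + ennreal e"
    by (simp only: e_split)
  finally show "c \<le> (INF a\<in>A. f a) * ennreal t + (INF b\<in>B. g b) * ennreal (1 - t) + ennreal e" .
qed

lemma opt_val_convex_comb_le:
  assumes "closed U" "0 < t" "t < 1"
    and "continuous_on (UNIV \<times> U) (\<lambda>z. r0 (fst z) (snd z))"
    and "\<And>i. continuous_on (UNIV \<times> U) (\<lambda>z. rc i (fst z) (snd z))"
    and "\<And>i. 0 \<le> x $ i" "\<And>i. 0 \<le> y $ i"
  shows "opt_val U \<sigma> b r0 rc (t *\<^sub>R x + (1 - t) *\<^sub>R y)
    \<le> opt_val U \<sigma> b r0 rc x * ennreal t + opt_val U \<sigma> b r0 rc y * ennreal (1 - t)"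
  unfolding opt_val_def
proof (rule le_convex_comb_INF_ennreal[OF assms(2,3)])
  fix p q
  assume pq: "p \<in> H_set U \<sigma> b rc x" "q \<in> H_set U \<sigma> b rc y"
  then have "prob_on U p" "prob_on U q"
    by (auto simp: H_set_def occ_G_def)
  then have "cost_int (mix t p q) r0 = cost_int p r0 * ennreal t + cost_int q r0 * ennreal (1 - t)"
    using assms(1-4) by (intro cost_int_mix) simp_all
  moreover have "(INF \<pi>\<in>H_set U \<sigma> b rc (t *\<^sub>R x + (1 - t) *\<^sub>R y). cost_int \<pi> r0) \<le> cost_int (mix t p q) r0"
    by (rule INF_lower[OF H_set_mix[OF pq assms(1-3,5-7)]])
  ultimately show "(INF \<pi>\<in>H_set U \<sigma> b rc (t *\<^sub>R x + (1 - t) *\<^sub>R y). cost_int \<pi> r0)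
      \<le> cost_int p r0 * ennreal t + cost_int q r0 * ennreal (1 - t)"
    by simp
qed

lemma continuous_on_convex_ennreal:
  fixes F :: "'a::euclidean_space \<Rightarrow> ennreal"
  assumes "open S" "convex S" "\<And>x. x \<in> S \<Longrightarrow> F x < top"
    and "\<And>x y (t :: real). x \<in> S \<Longrightarrow> y \<in> S \<Longrightarrow> 0 < t \<Longrightarrow> t < 1 \<Longrightarrow>
      F (t *\<^sub>R x + (1 - t) *\<^sub>R y) \<le> F x * ennreal t + F y * ennreal (1 - t)"
  shows "continuous_on S F"
proof -
  have "convex_on S (\<lambda>x. enn2real (F x))"
  proof (rule convex_onI[OF _ assms(2)])
    fix t :: real and x y
    assume "0 < t" "t < 1" "x \<in> S" "y \<in> S"
    then have "F ((1 - t) *\<^sub>R x + t *\<^sub>R y) \<le> F x * ennreal (1 - t) + F y * ennreal t"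
      using assms(4)[of x y "1 - t"] by simp
    moreover have "F x * ennreal (1 - t) + F y * ennreal t < top"
      using assms(3) \<open>x \<in> S\<close> \<open>y \<in> S\<close> by (simp add: ennreal_mult_less_top)
    ultimately have "enn2real (F ((1 - t) *\<^sub>R x + t *\<^sub>R y)) \<le> enn2real (F x * ennreal (1 - t) + F y * ennreal t)"
      by (rule enn2real_mono)
    also have "\<dots> = (1 - t) * enn2real (F x) + t * enn2real (F y)"
      using assms(3) \<open>x \<in> S\<close> \<open>y \<in> S\<close> \<open>0 < t\<close> \<open>t < 1\<close>
      by (simp add: enn2real_plus enn2real_mult ennreal_mult_less_top mult.commute)
    finally show "enn2real (F ((1 - t) *\<^sub>R x + t *\<^sub>R y)) \<le> (1 - t) * enn2real (F x) + t * enn2real (F y)" .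
  qed
  then have "continuous_on S (\<lambda>x. ennreal (enn2real (F x)))"
    by (intro continuous_on_ennreal convex_on_continuous[OF assms(1)])
  moreover have "ennreal (enn2real (F x)) = F x" if "x \<in> S" for x
    using assms(3)[OF that] by simp
  ultimately show ?thesis
    by (simp cong: continuous_on_cong)
qed

lemma open_ennreal_orthant: "open {x :: real^'k::finite. \<forall>i. c i < ennreal (x $ i)}"
proof -
  have "{x :: real^'k. \<forall>i. c i < ennreal (x $ i)} = (\<Inter>i. {x. c i < ennreal (x $ i)})"
    by auto
  then show ?thesis
    by (auto intro!: open_Collect_less continuous_on_ennreal continuous_intros)
qed

lemma convex_ennreal_orthant: "convex {x :: real^'k::finite. \<forall>i. c i < ennreal (x $ i)}"
  unfolding convex_def
proof (intro ballI allI impI CollectI)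
  fix x y :: "real^'k" and u v :: real and i
  assume "x \<in> {x. \<forall>i. c i < ennreal (x $ i)}" "y \<in> {x. \<forall>i. c i < ennreal (x $ i)}"
    and uv: "0 \<le> u" "0 \<le> v" "u + v = 1"
  then have "c i < ennreal (min (x $ i) (y $ i))"
    by (simp add: min_def)
  moreover have "u * min (x $ i) (y $ i) \<le> u * x $ i" "v * min (x $ i) (y $ i) \<le> v * y $ i"
    using uv by (simp_all add: mult_left_mono)
  moreover have "u * min (x $ i) (y $ i) + v * min (x $ i) (y $ i) = min (x $ i) (y $ i)"
    using uv(3) by (simp add: distrib_right[symmetric])
  ultimately show "c i < ennreal ((u *\<^sub>R x + v *\<^sub>R y) $ i)"
    by (auto elim!: order_less_le_trans intro!: ennreal_leI)
qed

lemma ennreal_orthant_pos: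
  assumes "x \<in> {x :: real^'k::finite. \<forall>i. c i < ennreal (x $ i)}"
  shows "0 < x $ i"
proof -
  have "0 < ennreal (x $ i)"
    using assms le_less_trans[OF zero_le] by blast
  then show ?thesis
    by simp
qed

lemma opt_val_le_cost_int:
  assumes "\<pi> \<in> occ_G U \<sigma> b" "\<And>i. cost_int \<pi> (rc i) \<le> ennreal (\<delta> $ i)"
  shows "opt_val U \<sigma> b r0 rc \<delta> \<le> cost_int \<pi> r0"
  unfolding opt_val_def using assms by (intro INF_lower) (simp add: H_set_def)

lemma continuous_on_opt_val:
  assumes "closed U" "cost_assm U r0" "\<forall>i. cost_assm U (rc i)" "open S" "convex S"
    and "\<And>\<delta> i. \<delta> \<in> S \<Longrightarrow> 0 \<le> \<delta> $ i" "\<And>\<delta>. \<delta> \<in> S \<Longrightarrow> opt_val U \<sigma> b r0 rc \<delta> < top"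
  shows "continuous_on S (opt_val U \<sigma> b r0 rc)"
proof (rule continuous_on_convex_ennreal[OF assms(4,5,7)])
  have "continuous_on (UNIV \<times> U) (\<lambda>z. r0 (fst z) (snd z))"
    "\<And>i. continuous_on (UNIV \<times> U) (\<lambda>z. rc i (fst z) (snd z))"
    using assms(2,3) by (simp_all add: cost_assm_def)
  then show "opt_val U \<sigma> b r0 rc (t *\<^sub>R x + (1 - t) *\<^sub>R y)
      \<le> opt_val U \<sigma> b r0 rc x * ennreal t + opt_val U \<sigma> b r0 rc y * ennreal (1 - t)"
    if "x \<in> S" "y \<in> S" "0 < t" "t < 1" for x y t
    using that assms(1,6) by (intro opt_val_convex_comb_le) simp_all
qed

theorem lemma3p4:
  fixes U :: "'u::metric_space set"
    and \<sigma> :: "real^'n::finite \<Rightarrow> real^'n^'n"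
    and b :: "real^'n \<Rightarrow> 'u \<Rightarrow> real^'n"
    and r0 :: "real^'n \<Rightarrow> 'u \<Rightarrow> real"
    and rc :: "'k::finite \<Rightarrow> real^'n \<Rightarrow> 'u \<Rightarrow> real"
    and \<delta>h :: "real^'k"
  assumes "standing_assms U \<sigma> b"
    and "cost_assm U r0"
    and "\<forall>i. cost_assm U (rc i)"
    and "hypA U \<sigma> b (\<lambda>x u. r0 x u + (\<Sum>i\<in>UNIV. rc i x u))"
    and "feasible U \<sigma> b r0 rc \<delta>h"
  shows "continuous (at \<delta>h within {\<delta>. \<forall>i. 0 \<le> \<delta> $ i}) (opt_val U \<sigma> b r0 rc)"
proof -
  obtain \<pi>' where \<pi>': "\<pi>' \<in> H_open U \<sigma> b rc \<delta>h" "cost_int \<pi>' r0 < top"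
    using assms(5) by (auto simp: feasible_def)
  define N where "N = {\<delta> :: real^'k. \<forall>i. cost_int \<pi>' (rc i) < ennreal (\<delta> $ i)}"
  have "open N" "convex N"
    unfolding N_def by (rule open_ennreal_orthant convex_ennreal_orthant)+
  have "\<delta>h \<in> N"
    using \<pi>'(1) by (simp add: N_def H_open_def)
  have N_pos: "0 \<le> \<delta> $ i" if "\<delta> \<in> N" for \<delta> i
    using ennreal_orthant_pos[of \<delta>] that unfolding N_def by (simp add: less_imp_le)
  have N_finite: "opt_val U \<sigma> b r0 rc \<delta> < top" if "\<delta> \<in> N" for \<delta>
  proof -
    have "opt_val U \<sigma> b r0 rc \<delta> \<le> cost_int \<pi>' r0"
      using that \<pi>'(1) by (intro opt_val_le_cost_int) (auto simp: N_def H_open_def less_imp_le)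
    then show ?thesis
      using \<pi>'(2) by simp
  qed
  have "closed U"
    using assms(1) by (simp add: standing_assms_def compact_imp_closed)
  then have "continuous_on N (opt_val U \<sigma> b r0 rc)"
    by (rule continuous_on_opt_val[OF _ assms(2,3) \<open>open N\<close> \<open>convex N\<close> N_pos N_finite])
  then have "isCont (opt_val U \<sigma> b r0 rc) \<delta>h"
    using \<open>open N\<close> \<open>\<delta>h \<in> N\<close> by (simp add: continuous_on_eq_continuous_at)
  then show ?thesis
    by (rule continuous_at_imp_continuous_at_within)
qed

end
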